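(* Let $A\in\mathbb{R}^{m\times m}$ and $C\in\mathbb{R}^{n\times n}$ be symmetric and $B\in\mathbb{R}^{n\times m}$, with $\mu I\preceq A\preceq LI$ for some $0<\mu\le L$, $\|B\|_2\le L$, $\|C\|_2\le L$, and $C+BA^{-1}B^\top\succ0$. Let $r>0$ and $M=\begin{pmatrix}-C & -B\\ rB^\top & -rA\end{pmatrix}$. Let $\lambda=\lambda_0+i\lambda_1$ ($\lambda_0,\lambda_1\in\mathbb{R}$) be any eigenvalue of $M$. Then: (1) $|\lambda_1|\le\sqrt{r}\,L$; (2) if $\lambda_1\neq0$, then $\lambda_0\le-\frac{\mu(r-\kappa)}{2}$; (3) if $r\ge1$, then $\lambda_0^2+\lambda_1^2\le\|M\|_2^2\le4r^2L^2$; (4) if $r>\kappa$ and $\lambda_1=0$, then $\lambda_0\le-\mu_x$; (5) if $r>\kappa$ (and $\mu_x>0$), then $\lambda_0<0$.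
   Context: $\kappa=L/\mu$ and $\mu_x=\min\{L,\lambda_{\min}(C+BA^{-1}B^\top)\}$. *)

theory Defs
  imports "HOL-Analysis.Analysis"
begin

definition spec_norm :: "real^'n^'m \<Rightarrow> real" where
  "spec_norm M = onorm (\<lambda>x. M *v x)"

definition cmat :: "real^'n^'m \<Rightarrow> complex^'n^'m" where
  "cmat M = (\<chi> i j. complex_of_real (M $ i $ j))"

definition is_eigenvalue :: "real^'n^'n \<Rightarrow> complex \<Rightarrow> bool" where
  "is_eigenvalue M lam \<longleftrightarrow> (\<exists>v. v \<noteq> 0 \<and> cmat M *v v = lam *s v)"

definition lambda_min :: "real^'n^'n \<Rightarrow> real" where
  "lambda_min S = Min {t. \<exists>v. v \<noteq> 0 \<and> S *v v = t *s v}"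

definition psd_le :: "real^'n^'n \<Rightarrow> real^'n^'n \<Rightarrow> bool" where
  "psd_le X Y \<longleftrightarrow> (\<forall>x. x \<bullet> (X *v x) \<le> x \<bullet> (Y *v x))"

definition pos_def :: "real^'n^'n \<Rightarrow> bool" where
  "pos_def X \<longleftrightarrow> (\<forall>x. x \<noteq> 0 \<longrightarrow> 0 < x \<bullet> (X *v x))"

definition blockM :: "real^'m^'m \<Rightarrow> real^'m^'n \<Rightarrow> real^'n^'n \<Rightarrow> real \<Rightarrow> real^('n+'m)^('n+'m)" where
  "blockM A B C r = (\<chi> i j. case (i, j) of
      (Inl p, Inl q) \<Rightarrow> - (C $ p $ q)
    | (Inl p, Inr q) \<Rightarrow> - (B $ p $ q)
    | (Inr p, Inl q) \<Rightarrow> r * (B $ q $ p)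
    | (Inr p, Inr q) \<Rightarrow> - r * (A $ p $ q))"

end

theory Submission
  imports Defs
begin

text \<open>Write an eigenvector of \<open>M\<close> for \<open>\<lambda> = \<lambda>\<^sub>0 + i\<lambda>\<^sub>1\<close> as \<open>p + iq\<close> with real \<open>p, q\<close>
  and split both into their \<open>(x, y)\<close> blocks. Pairing each block row with the eigenvector gives the real
  and imaginary parts of \<open>x\<^sup>*(-Cx - By) = \<lambda>|x|\<^sup>2\<close> and \<open>y\<^sup>*(rB\<^sup>Tx - rAy) = \<lambda>|y|\<^sup>2\<close>; the cross term
  \<open>x\<^sup>*By\<close> appears in both. If \<open>\<lambda>\<^sub>1 \<noteq> 0\<close> the imaginary parts force \<open>|y|\<^sup>2 = r|x|\<^sup>2\<close>, and the
  bounds on \<open>A, B, C\<close> then give (1) and (2). For a real eigenvalue \<open>\<lambda> = rs\<close> the second row gives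
  \<open>B\<^sup>Tx = (A + sI)y\<close>, which turns \<open>x\<bullet>Sx\<close> for the Schur complement \<open>S\<close> into an expression in
  \<open>y\<close>; comparing it with \<open>\<lambda>\<^sub>m\<^sub>i\<^sub>n(S)|x|\<^sup>2\<close> and with \<open>x\<bullet>Sx > 0\<close> gives (4). Part (3) is
  \<open>|\<lambda>| \<le> \<parallel>M\<parallel>\<close> together with \<open>\<parallel>Mz\<parallel> \<le> 2rL\<parallel>z\<parallel>\<close>, and (5) combines (2) and (4).\<close>

definition vec_inl :: "real^('n::finite + 'm::finite) \<Rightarrow> real^'n" where
  "vec_inl z = (\<chi> p. z $ Inl p)"

definition vec_inr :: "real^('n::finite + 'm::finite) \<Rightarrow> real^'m" where
  "vec_inr z = (\<chi> q. z $ Inr q)"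

lemma sum_UNIV_Plus:
  fixes g :: "'a::finite + 'b::finite \<Rightarrow> 'c::comm_monoid_add"
  shows "(\<Sum>i\<in>UNIV. g i) = (\<Sum>p\<in>UNIV. g (Inl p)) + (\<Sum>q\<in>UNIV. g (Inr q))"
  using sum.Plus[of "UNIV::'a set" "UNIV::'b set" g] by (simp add: o_def)

lemma
  shows vec_inl_add [simp]: "vec_inl (z + w) = vec_inl z + vec_inl w"
    and vec_inl_diff [simp]: "vec_inl (z - w) = vec_inl z - vec_inl w"
    and vec_inl_scaleR [simp]: "vec_inl (c *\<^sub>R z) = c *\<^sub>R vec_inl z"
    and vec_inr_add [simp]: "vec_inr (z + w) = vec_inr z + vec_inr w"
    and vec_inr_diff [simp]: "vec_inr (z - w) = vec_inr z - vec_inr w"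
    and vec_inr_scaleR [simp]: "vec_inr (c *\<^sub>R z) = c *\<^sub>R vec_inr z"
  by (simp_all add: vec_eq_iff vec_inl_def vec_inr_def)

lemma vec_eq_0_iff_inl_inr: "z = 0 \<longleftrightarrow> vec_inl z = 0 \<and> vec_inr z = 0"
  by (auto simp: vec_inl_def vec_inr_def vec_eq_iff) (metis sum.exhaust)

lemma inner_vec_inl_inr: "z \<bullet> w = vec_inl z \<bullet> vec_inl w + vec_inr z \<bullet> vec_inr w"
  by (simp add: inner_vec_def vec_inl_def vec_inr_def sum_UNIV_Plus)

lemma norm_vec_inl_inr: "(norm z)\<^sup>2 = (norm (vec_inl z))\<^sup>2 + (norm (vec_inr z))\<^sup>2"
  by (simp add: power2_norm_eq_inner inner_vec_inl_inr[of z z])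

lemma vec_inl_blockM: "vec_inl (blockM A B C r *v z) = - (C *v vec_inl z) - B *v vec_inr z"
  by (simp add: vec_eq_iff vec_inl_def vec_inr_def matrix_vector_mult_def blockM_def
      sum_UNIV_Plus sum_negf algebra_simps)

lemma vec_inr_blockM:
  "vec_inr (blockM A B C r *v z) = r *\<^sub>R (transpose B *v vec_inl z - A *v vec_inr z)"
  unfolding scaleR_diff_right
  by (simp add: vec_eq_iff vec_inl_def vec_inr_def matrix_vector_mult_def blockM_def transpose_def
      sum_UNIV_Plus sum_distrib_left sum_negf algebra_simps)

lemma is_eigenvalue_real_pairE:
  assumes "is_eigenvalue M lam"
  obtains p q where "p \<noteq> 0 \<or> q \<noteq> 0"
    and "M *v p = Re lam *\<^sub>R p - Im lam *\<^sub>R q" and "M *v q = Im lam *\<^sub>R p + Re lam *\<^sub>R q"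
proof -
  obtain v where "v \<noteq> 0" and ev: "cmat M *v v = lam *s v"
    using assms unfolding is_eigenvalue_def by blast
  define p where "p = (\<chi> i. Re (v $ i))"
  define q where "q = (\<chi> i. Im (v $ i))"
  have row: "(\<Sum>j\<in>UNIV. complex_of_real (M $ i $ j) * v $ j) = lam * v $ i" for i
    using ev by (simp add: vec_eq_iff matrix_vector_mult_def cmat_def)
  have "(\<Sum>j\<in>UNIV. M $ i $ j * Re (v $ j)) = Re lam * Re (v $ i) - Im lam * Im (v $ i)" for i
    using arg_cong[OF row, of Re] by (simp add: Re_sum)
  then have "M *v p = Re lam *\<^sub>R p - Im lam *\<^sub>R q"
    by (simp add: vec_eq_iff matrix_vector_mult_def p_def q_def)
  moreover have "(\<Sum>j\<in>UNIV. M $ i $ j * Im (v $ j)) = Im lam * Re (v $ i) + Re lam * Im (v $ i)" for i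
    using arg_cong[OF row, of Im] by (simp add: Im_sum)
  then have "M *v q = Im lam *\<^sub>R p + Re lam *\<^sub>R q"
    by (simp add: vec_eq_iff matrix_vector_mult_def p_def q_def)
  moreover have "p \<noteq> 0 \<or> q \<noteq> 0"
    using \<open>v \<noteq> 0\<close> by (auto simp: p_def q_def vec_eq_iff complex_eq_iff)
  ultimately show ?thesis using that by blast
qed

lemma is_eigenvalue_Im_0E:
  assumes "is_eigenvalue M lam" and "Im lam = 0"
  obtains v where "v \<noteq> 0" and "M *v v = Re lam *\<^sub>R v"
  using is_eigenvalue_real_pairE[OF assms(1)] assms(2) by (metis diff_zero add_0 scale_zero_left)

lemma
  fixes x1 x2 :: "'a::real_inner"
  assumes "g1 = l0 *\<^sub>R x1 - l1 *\<^sub>R x2" and "g2 = l1 *\<^sub>R x1 + l0 *\<^sub>R x2"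
  shows inner_rotation_pair_Re: "x1 \<bullet> g1 + x2 \<bullet> g2 = l0 * (x1 \<bullet> x1 + x2 \<bullet> x2)"
    and inner_rotation_pair_Im: "x1 \<bullet> g2 - x2 \<bullet> g1 = l1 * (x1 \<bullet> x1 + x2 \<bullet> x2)"
  unfolding assms by (simp_all add: inner_diff_right inner_add_right inner_commute algebra_simps)

lemma norm_rotation_pair:
  fixes p q :: "'a::real_inner"
  shows "(norm (l0 *\<^sub>R p - l1 *\<^sub>R q))\<^sup>2 + (norm (l1 *\<^sub>R p + l0 *\<^sub>R q))\<^sup>2
    = (l0\<^sup>2 + l1\<^sup>2) * ((norm p)\<^sup>2 + (norm q)\<^sup>2)"
  unfolding power2_norm_eq_inner
  by (simp add: inner_diff_left inner_diff_right inner_add_left inner_add_right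
      inner_commute[of q p] power2_eq_square algebra_simps)

lemma inner_transpose_matrix_vector: "(y::real^'m) \<bullet> (transpose B *v x) = x \<bullet> (B *v y)"
  by (metis dot_lmul_matrix inner_commute transpose_transpose vector_transpose_matrix)

lemma inner_symmetric_matrix_vector:
  "transpose A = A \<Longrightarrow> (x::real^'n) \<bullet> (A *v y) = y \<bullet> (A *v x)"
  by (metis inner_transpose_matrix_vector)

lemma transpose_add: "transpose (X + Y) = transpose X + transpose (Y::'a::semiring_1^'n^'m)"
  by (simp add: transpose_def vec_eq_iff)

lemma scaleR_mat_1_matrix_vector [simp]: "(c *\<^sub>R mat 1) *v x = c *\<^sub>R (x::real^'n)"
proof -
  have "(c *\<^sub>R mat 1) *v x = c *\<^sub>R (mat 1 *v x)"
    by (simp add: vec_eq_iff matrix_vector_mult_def sum_distrib_left mult.assoc)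
  then show ?thesis by simp
qed

lemma
  shows psd_le_scaleR_mat_1_left: "psd_le (c *\<^sub>R mat 1) A \<longleftrightarrow> (\<forall>x. c * (x \<bullet> x) \<le> x \<bullet> (A *v x))"
    and psd_le_scaleR_mat_1_right: "psd_le A (c *\<^sub>R mat 1) \<longleftrightarrow> (\<forall>x. x \<bullet> (A *v x) \<le> c * (x \<bullet> x))"
  by (simp_all add: psd_le_def)

lemma spec_norm_nonneg: "0 \<le> spec_norm M"
  unfolding spec_norm_def by (rule onorm_pos_le) (rule matrix_vector_mul_bounded_linear)

lemma norm_matrix_vector_le_spec_norm: "norm (M *v x) \<le> spec_norm M * norm x"
  unfolding spec_norm_def by (rule onorm) (rule matrix_vector_mul_bounded_linear)

lemma norm_matrix_vector_le:
  assumes "spec_norm M \<le> L" shows "norm (M *v x) \<le> L * norm x"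
  using norm_matrix_vector_le_spec_norm[of M x] mult_right_mono[OF assms norm_ge_zero[of x]]
  by linarith

lemma abs_inner_matrix_vector_le:
  assumes "spec_norm M \<le> L" shows "\<bar>x \<bullet> (M *v y)\<bar> \<le> L * (norm x * norm y)"
proof -
  have "\<bar>x \<bullet> (M *v y)\<bar> \<le> norm x * norm (M *v y)" by (rule Cauchy_Schwarz_ineq2)
  also have "\<dots> \<le> norm x * (L * norm y)"
    by (simp add: norm_matrix_vector_le[OF assms] mult_left_mono)
  finally show ?thesis by (simp add: algebra_simps)
qed

lemma inner_matrix_vector_ge:
  assumes "spec_norm M \<le> L" shows "- L * (x \<bullet> x) \<le> x \<bullet> (M *v x)"
  using abs_inner_matrix_vector_le[OF assms, of x x]
  by (simp add: power2_norm_eq_inner[symmetric] power2_eq_square)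

lemma norm_transpose_matrix_vector_le:
  assumes "spec_norm M \<le> L" shows "norm (transpose M *v x) \<le> L * norm x"
proof -
  let ?w = "transpose M *v x"
  have "norm ?w * norm ?w = x \<bullet> (M *v ?w)"
    by (simp add: inner_transpose_matrix_vector[symmetric] power2_norm_eq_inner[symmetric] power2_eq_square)
  also have "\<dots> \<le> norm ?w * (L * norm x)"
    using abs_inner_matrix_vector_le[OF assms, of x ?w] by (simp add: algebra_simps)
  finally show ?thesis
    using spec_norm_nonneg[of M] assms by (cases "norm ?w = 0") auto
qed

text \<open>Polarization: \<open>4 u\<bullet>Ay\<close> is the difference of the forms at \<open>u + y\<close> and \<open>u - y\<close>,
  bounded by \<open>L |u + y|\<^sup>2\<close>; take \<open>u\<close> along \<open>Ay\<close> with \<open>|u| = |y|\<close>.\<close>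
lemma norm_matrix_vector_le_of_psd:
  fixes A :: "real^'m^'m"
  assumes symA: "transpose A = A" and lower: "\<And>z. 0 \<le> z \<bullet> (A *v z)"
    and upper: "\<And>z. z \<bullet> (A *v z) \<le> L * (z \<bullet> z)"
  shows "norm (A *v y) \<le> L * norm y"
proof (cases "y = 0 \<or> A *v y = 0")
  case True
  have "0 \<le> L * (norm y)\<^sup>2" using lower[of y] upper[of y] by (simp add: power2_norm_eq_inner)
  then have "0 \<le> L * norm y" by (cases "y = 0") (auto simp: zero_le_mult_iff)
  then show ?thesis using True by auto
next
  case False
  then have ny: "0 < norm y" by auto
  have "0 \<le> L * (norm y)\<^sup>2" using lower[of y] upper[of y] by (simp add: power2_norm_eq_inner)
  then have L0: "0 \<le> L" using ny by (simp add: zero_le_mult_iff)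
  define u where "u = (norm y / norm (A *v y)) *\<^sub>R (A *v y)"
  have nu: "norm u = norm y" using False by (simp add: u_def)
  have uA: "u \<bullet> (A *v y) = norm y * norm (A *v y)"
    using False by (simp add: u_def power2_norm_eq_inner[symmetric] power2_eq_square)
  have "(u + y) \<bullet> (A *v (u + y)) - (u - y) \<bullet> (A *v (u - y)) = 4 * (u \<bullet> (A *v y))"
    using inner_symmetric_matrix_vector[OF symA, of y u]
    by (simp add: algebra_simps inner_add_left inner_add_right inner_diff_left inner_diff_right)
  then have "4 * (u \<bullet> (A *v y)) \<le> L * (norm (u + y))\<^sup>2"
    using lower[of "u - y"] upper[of "u + y"] by (simp add: power2_norm_eq_inner)
  also have "\<dots> \<le> L * (norm u + norm y)\<^sup>2"
    by (intro mult_left_mono power_mono norm_triangle_ineq L0) simp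
  finally have "norm y * norm (A *v y) \<le> norm y * (L * norm y)"
    using uA nu by (simp add: power2_eq_square algebra_simps)
  then show ?thesis using ny by simp
qed

lemma symmetric_eigenvalues_finite:
  fixes S :: "real^'n^'n"
  assumes symS: "transpose S = S"
  shows "finite {t. \<exists>v. v \<noteq> 0 \<and> S *v v = t *s v}"
proof -
  define E where "E = {t. \<exists>v. v \<noteq> 0 \<and> S *v v = t *s v}"
  define e where "e t = (SOME v. v \<noteq> 0 \<and> S *v v = t *s v)" for t
  have e: "e t \<noteq> 0 \<and> S *v e t = t *\<^sub>R e t" if "t \<in> E" for t
    using someI_ex[of "\<lambda>v. v \<noteq> 0 \<and> S *v v = t *s v"] that
    by (simp add: E_def e_def scalar_mult_eq_scaleR)
  have orth: "e a \<bullet> e b = 0" if "a \<in> E" "b \<in> E" "a \<noteq> b" for a b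
  proof -
    have "a * (e a \<bullet> e b) = b * (e a \<bullet> e b)"
      using e[OF that(1)] e[OF that(2)] inner_symmetric_matrix_vector[OF symS, of "e b" "e a"]
      by (simp add: inner_commute)
    then show ?thesis using \<open>a \<noteq> b\<close> by simp
  qed
  then have "inj_on e E" using e by (metis inj_onI inner_eq_zero_iff)
  moreover have "independent (e ` E)"
    by (rule pairwise_orthogonal_independent)
      (use orth e in \<open>auto simp: pairwise_def orthogonal_def\<close>)
  ultimately show ?thesis
    using finiteI_independent finite_imageD E_def by blast
qed

text \<open>Expanding the form at \<open>x - \<delta> Px\<close> gives \<open>0 \<le> -2\<delta>|Px|\<^sup>2 + \<delta>\<^sup>2 (Px)\<bullet>P(Px)\<close>
  for every \<open>\<delta> > 0\<close>, which forces \<open>Px = 0\<close>.\<close>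
lemma psd_form_eq_0_imp_matrix_vector_eq_0:
  fixes P :: "real^'n^'n"
  assumes symP: "transpose P = P" and psd: "\<And>z. 0 \<le> z \<bullet> (P *v z)"
    and "x \<bullet> (P *v x) = 0"
  shows "P *v x = 0"
proof (rule ccontr)
  define d where "d = P *v x"
  define g where "g = d \<bullet> (P *v d)"
  assume "P *v x \<noteq> 0"
  then have dd: "0 < d \<bullet> d" by (simp add: d_def)
  have g0: "0 \<le> g" using psd by (simp add: g_def)
  have expand: "(x - \<delta> *\<^sub>R d) \<bullet> (P *v (x - \<delta> *\<^sub>R d)) = \<delta> * (\<delta> * g - 2 * (d \<bullet> d))" for \<delta>
    using \<open>x \<bullet> (P *v x) = 0\<close> inner_symmetric_matrix_vector[OF symP, of x d]
    by (simp add: g_def d_def[symmetric] matrix_vector_mult_scaleR inner_diff_left inner_diff_right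
        inner_commute[of x d] algebra_simps)
  define \<delta> where "\<delta> = (d \<bullet> d) / (g + 1)"
  have "0 < \<delta>" using dd g0 by (simp add: \<delta>_def)
  then have "2 * (d \<bullet> d) \<le> \<delta> * g"
    using psd[of "x - \<delta> *\<^sub>R d"] by (simp add: expand zero_le_mult_iff)
  also have "\<dots> = (d \<bullet> d) * (g / (g + 1))" by (simp add: \<delta>_def)
  also have "\<dots> \<le> d \<bullet> d" by (intro mult_left_le) (use g0 in auto)
  finally show False using dd by simp
qed

lemma quadratic_form_min_on_sphere:
  fixes S :: "real^'n^'n"
  obtains x0 where "norm x0 = 1" and "\<And>z. (x0 \<bullet> (S *v x0)) * (z \<bullet> z) \<le> z \<bullet> (S *v z)"
proof -
  define f where "f z = z \<bullet> (S *v z)" for z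
  have "sphere (0::real^'n) 1 \<noteq> {}"
    using norm_axis_1[of undefined] by (metis empty_iff mem_sphere_0)
  moreover have "continuous_on (sphere 0 1) f"
    unfolding f_def by (intro continuous_intros linear_continuous_on matrix_vector_mul_bounded_linear)
  ultimately obtain x0 where x0: "norm x0 = 1" and min: "\<And>y. norm y = 1 \<Longrightarrow> f x0 \<le> f y"
    using continuous_attains_inf[OF compact_sphere] by (metis mem_sphere_0)
  have "f x0 * (z \<bullet> z) \<le> f z" for z
  proof (cases "z = 0")
    case False
    have "f x0 \<le> f (inverse (norm z) *\<^sub>R z)" using False by (intro min) simp
    also have "\<dots> = f z / (z \<bullet> z)"
      by (simp add: f_def matrix_vector_mult_scaleR power2_norm_eq_inner[symmetric] power2_eq_square
          divide_inverse)
    finally show ?thesis using False by (simp add: pos_le_divide_eq)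
  qed (simp add: f_def)
  with x0 show ?thesis using that unfolding f_def by blast
qed

text \<open>The minimum \<open>t\<^sub>0\<close> of the Rayleigh quotient is an eigenvalue: \<open>S - t\<^sub>0 I\<close> is positive
  semidefinite and its form vanishes at the minimiser.\<close>
lemma lambda_min_le_rayleigh:
  fixes S :: "real^'n^'n"
  assumes symS: "transpose S = S"
  shows "lambda_min S * (x \<bullet> x) \<le> x \<bullet> (S *v x)"
proof -
  obtain x0 where x0: "norm x0 = 1" and min: "\<And>z. (x0 \<bullet> (S *v x0)) * (z \<bullet> z) \<le> z \<bullet> (S *v z)"
    using quadratic_form_min_on_sphere by blast
  define t0 where "t0 = x0 \<bullet> (S *v x0)"
  define P where "P = S - t0 *\<^sub>R mat 1"
  have P: "P *v z = S *v z - t0 *\<^sub>R z" for z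
    by (simp add: P_def matrix_vector_mult_diff_rdistrib)
  have "transpose P = P"
    using symS by (simp add: P_def vec_eq_iff transpose_def mat_def)
  moreover have "0 \<le> z \<bullet> (P *v z)" for z
    using min[of z] by (simp add: P inner_diff_right t0_def)
  moreover have "x0 \<bullet> (P *v x0) = 0"
    using x0 by (simp add: P inner_diff_right t0_def norm_eq_1)
  ultimately have "P *v x0 = 0" by (rule psd_form_eq_0_imp_matrix_vector_eq_0)
  then have "S *v x0 = t0 *s x0" by (simp add: P scalar_mult_eq_scaleR)
  with x0 have "lambda_min S \<le> t0"
    unfolding lambda_min_def by (intro Min_le symmetric_eigenvalues_finite symS) (auto intro!: exI[of _ x0])
  then have "lambda_min S * (x \<bullet> x) \<le> t0 * (x \<bullet> x)" by (simp add: mult_right_mono)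
  also have "\<dots> \<le> x \<bullet> (S *v x)" using min unfolding t0_def .
  finally show ?thesis .
qed

lemma is_eigenvalue_modulus_le_spec_norm:
  assumes "is_eigenvalue M lam"
  shows "(Re lam)\<^sup>2 + (Im lam)\<^sup>2 \<le> (spec_norm M)\<^sup>2"
proof -
  obtain p q where nz: "p \<noteq> 0 \<or> q \<noteq> 0"
    and Mp: "M *v p = Re lam *\<^sub>R p - Im lam *\<^sub>R q" and Mq: "M *v q = Im lam *\<^sub>R p + Re lam *\<^sub>R q"
    using is_eigenvalue_real_pairE[OF assms] .
  have bound: "(norm (M *v z))\<^sup>2 \<le> (spec_norm M)\<^sup>2 * (norm z)\<^sup>2" for z
    using power_mono[OF norm_matrix_vector_le_spec_norm[of M z] norm_ge_zero, of 2]
    by (simp add: power_mult_distrib)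
  have "((Re lam)\<^sup>2 + (Im lam)\<^sup>2) * ((norm p)\<^sup>2 + (norm q)\<^sup>2)
      = (norm (M *v p))\<^sup>2 + (norm (M *v q))\<^sup>2"
    unfolding Mp Mq by (rule norm_rotation_pair[symmetric])
  also have "\<dots> \<le> (spec_norm M)\<^sup>2 * ((norm p)\<^sup>2 + (norm q)\<^sup>2)"
    using bound[of p] bound[of q] by (simp add: distrib_left)
  finally have "((Re lam)\<^sup>2 + (Im lam)\<^sup>2) * ((norm p)\<^sup>2 + (norm q)\<^sup>2)
      \<le> (spec_norm M)\<^sup>2 * ((norm p)\<^sup>2 + (norm q)\<^sup>2)" .
  moreover have "0 < (norm p)\<^sup>2 + (norm q)\<^sup>2"
    using nz by (auto intro: add_pos_nonneg add_nonneg_pos)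
  ultimately show ?thesis by (simp add: mult_le_cancel_right)
qed

lemma norm_blockM_matrix_vector_le:
  fixes A :: "real^'m^'m" and C :: "real^'n^'n" and B :: "real^'m^'n"
  assumes symA: "transpose A = A" and lower: "\<And>z. 0 \<le> z \<bullet> (A *v z)"
    and upper: "\<And>z. z \<bullet> (A *v z) \<le> L * (z \<bullet> z)"
    and normB: "spec_norm B \<le> L" and normC: "spec_norm C \<le> L" and "1 \<le> r"
  shows "norm (blockM A B C r *v z) \<le> 2 * r * L * norm z"
proof -
  define x where "x = vec_inl z"
  define y where "y = vec_inr z"
  define w where "w = blockM A B C r *v z"
  define t where "t = norm x + norm y"
  have L0: "0 \<le> L" using normB spec_norm_nonneg order_trans by blast
  have "norm (vec_inl w) \<le> norm (C *v x) + norm (B *v y)"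
    using norm_triangle_ineq4[of "- (C *v x)" "B *v y"] by (simp add: w_def vec_inl_blockM x_def y_def)
  also have "\<dots> \<le> L * t"
    unfolding t_def distrib_left by (intro add_mono norm_matrix_vector_le normC normB)
  finally have wx: "norm (vec_inl w) \<le> L * t" .
  have "norm (vec_inr w) \<le> r * (norm (transpose B *v x) + norm (A *v y))"
    using \<open>1 \<le> r\<close> norm_triangle_ineq4[of "transpose B *v x" "A *v y"]
    unfolding w_def vec_inr_blockM x_def y_def by (auto intro: mult_left_mono)
  also have "\<dots> \<le> r * (L * t)"
    using \<open>1 \<le> r\<close> norm_transpose_matrix_vector_le[OF normB, of x]
      norm_matrix_vector_le_of_psd[OF symA lower upper, of y]
    by (intro mult_left_mono) (simp_all add: t_def distrib_left)
  finally have wy: "norm (vec_inr w) \<le> r * (L * t)" .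
  have "t\<^sup>2 \<le> 2 * (norm z)\<^sup>2"
    unfolding norm_vec_inl_inr[of z] x_def[symmetric] y_def[symmetric] t_def
    using sum_squares_ge_zero[of "norm x - norm y" 0] by (simp add: power2_eq_square algebra_simps)
  have "(norm w)\<^sup>2 \<le> (L * t)\<^sup>2 + (r * (L * t))\<^sup>2"
    unfolding norm_vec_inl_inr[of w]
    using power_mono[OF wx norm_ge_zero, of 2] power_mono[OF wy norm_ge_zero, of 2] by linarith
  also have "\<dots> = (1 + r\<^sup>2) * (L\<^sup>2 * t\<^sup>2)" by (simp add: power_mult_distrib algebra_simps)
  also have "\<dots> \<le> (2 * r\<^sup>2) * (L\<^sup>2 * (2 * (norm z)\<^sup>2))"
  proof -
    have "1 \<le> r\<^sup>2" using \<open>1 \<le> r\<close> by (rule one_le_power)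
    then show ?thesis
      by (intro mult_mono mult_left_mono \<open>t\<^sup>2 \<le> 2 * (norm z)\<^sup>2\<close>) simp_all
  qed
  also have "\<dots> = (2 * r * L * norm z)\<^sup>2" by (simp add: power_mult_distrib)
  finally have "(norm w)\<^sup>2 \<le> (2 * r * L * norm z)\<^sup>2" .
  then show ?thesis
    unfolding w_def by (rule power2_le_imp_le) (use \<open>1 \<le> r\<close> L0 in simp)
qed

lemma spec_norm_blockM_le:
  fixes A :: "real^'m^'m" and C :: "real^'n^'n" and B :: "real^'m^'n"
  assumes "transpose A = A" and "\<And>z. 0 \<le> z \<bullet> (A *v z)" and "\<And>z. z \<bullet> (A *v z) \<le> L * (z \<bullet> z)"
    and "spec_norm B \<le> L" and "spec_norm C \<le> L" and "1 \<le> r"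
  shows "spec_norm (blockM A B C r) \<le> 2 * r * L"
  unfolding spec_norm_def by (rule onorm_le) (rule norm_blockM_matrix_vector_le[OF assms])

lemma nonreal_eigenvalue_scalar_bounds:
  fixes r \<mu> L X Y c a Z K l0 l1 :: real
  assumes "0 < r" and "0 \<le> X" and "0 < X + Y"
    and Re_x: "- c - Z = l0 * X" and Im_x: "K = l1 * X"
    and Re_y: "r * (Z - a) = l0 * Y" and Im_y: "r * K = l1 * Y"
    and c: "- L * X \<le> c" and a: "\<mu> * Y \<le> a" and K: "K\<^sup>2 \<le> L\<^sup>2 * X * Y"
    and "l1 \<noteq> 0"
  shows "l1\<^sup>2 \<le> r * L\<^sup>2" and "2 * l0 \<le> L - \<mu> * r"
proof -
  have "l1 * Y = l1 * (r * X)" using Im_x Im_y by (metis mult.left_commute)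
  then have Y: "Y = r * X" using \<open>l1 \<noteq> 0\<close> by (simp add: mult.commute)
  have "0 < X" using \<open>0 \<le> X\<close> \<open>0 < X + Y\<close> Y by (cases "X = 0") auto
  have "l1\<^sup>2 * X\<^sup>2 \<le> (r * L\<^sup>2) * X\<^sup>2"
    using K Im_x Y by (simp add: power2_eq_square algebra_simps)
  then show "l1\<^sup>2 \<le> r * L\<^sup>2" using \<open>0 < X\<close> by simp
  have "r * (2 * l0 * X) = r * (- c - a)" using Re_x Re_y Y by (simp add: algebra_simps)
  then have "2 * l0 * X = - c - a" using \<open>0 < r\<close> by simp
  also have "\<dots> \<le> (L - \<mu> * r) * X" using c a Y by (simp add: algebra_simps)
  finally show "2 * l0 \<le> L - \<mu> * r" using \<open>0 < X\<close> by simp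
qed

lemma inner_cross_term_sq_le:
  assumes "spec_norm B \<le> L"
  shows "(x2 \<bullet> (B *v y1) - x1 \<bullet> (B *v y2))\<^sup>2
    \<le> L\<^sup>2 * (x1 \<bullet> x1 + x2 \<bullet> x2) * (y1 \<bullet> y1 + y2 \<bullet> y2)"
proof -
  define T where "T = norm x2 * norm y1 + norm x1 * norm y2"
  have "\<bar>x2 \<bullet> (B *v y1) - x1 \<bullet> (B *v y2)\<bar> \<le> L * T"
    using abs_inner_matrix_vector_le[OF assms, of x2 y1] abs_inner_matrix_vector_le[OF assms, of x1 y2]
    by (simp add: T_def distrib_left)
  then have "(x2 \<bullet> (B *v y1) - x1 \<bullet> (B *v y2))\<^sup>2 \<le> L\<^sup>2 * T\<^sup>2"
    by (metis abs_ge_zero power2_abs power_mono power_mult_distrib)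
  also have "T\<^sup>2 \<le> (x1 \<bullet> x1 + x2 \<bullet> x2) * (y1 \<bullet> y1 + y2 \<bullet> y2)"
  proof -
    have "(x1 \<bullet> x1 + x2 \<bullet> x2) * (y1 \<bullet> y1 + y2 \<bullet> y2) - T\<^sup>2
        = (norm x1 * norm y1 - norm x2 * norm y2)\<^sup>2"
      by (simp add: T_def power2_norm_eq_inner[symmetric] power2_eq_square algebra_simps)
    then show ?thesis by (metis diff_ge_0_iff_ge zero_le_power2)
  qed
  finally show ?thesis by (simp add: mult.assoc mult_left_mono)
qed

lemma blockM_nonreal_eigenvalue_bounds:
  fixes A :: "real^'m^'m" and C :: "real^'n^'n" and B :: "real^'m^'n"
  assumes symA: "transpose A = A" and symC: "transpose C = C"
    and lower: "\<And>z. \<mu> * (z \<bullet> z) \<le> z \<bullet> (A *v z)"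
    and normB: "spec_norm B \<le> L" and normC: "spec_norm C \<le> L" and "0 < r"
    and eig: "is_eigenvalue (blockM A B C r) lam" and "Im lam \<noteq> 0"
  shows "(Im lam)\<^sup>2 \<le> r * L\<^sup>2" and "2 * Re lam \<le> L - \<mu> * r"
proof -
  define l0 l1 where "l0 = Re lam" and "l1 = Im lam"
  obtain p q where nz: "p \<noteq> 0 \<or> q \<noteq> 0"
    and Mp: "blockM A B C r *v p = l0 *\<^sub>R p - l1 *\<^sub>R q"
    and Mq: "blockM A B C r *v q = l1 *\<^sub>R p + l0 *\<^sub>R q"
    using is_eigenvalue_real_pairE[OF eig] unfolding l0_def l1_def .
  define x1 x2 y1 y2
    where "x1 = vec_inl p" and "x2 = vec_inl q" and "y1 = vec_inr p" and "y2 = vec_inr q"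
  have x_rows: "- (C *v x1) - B *v y1 = l0 *\<^sub>R x1 - l1 *\<^sub>R x2"
      "- (C *v x2) - B *v y2 = l1 *\<^sub>R x1 + l0 *\<^sub>R x2"
    using arg_cong[OF Mp, of vec_inl] arg_cong[OF Mq, of vec_inl]
    by (simp_all add: vec_inl_blockM x1_def x2_def y1_def y2_def)
  have y_rows: "r *\<^sub>R (transpose B *v x1 - A *v y1) = l0 *\<^sub>R y1 - l1 *\<^sub>R y2"
      "r *\<^sub>R (transpose B *v x2 - A *v y2) = l1 *\<^sub>R y1 + l0 *\<^sub>R y2"
    using arg_cong[OF Mp, of vec_inr] arg_cong[OF Mq, of vec_inr]
    by (simp_all add: vec_inr_blockM x1_def x2_def y1_def y2_def del: transpose_matrix_vector)
  define X Y where "X = x1 \<bullet> x1 + x2 \<bullet> x2" and "Y = y1 \<bullet> y1 + y2 \<bullet> y2"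
  define c a where "c = x1 \<bullet> (C *v x1) + x2 \<bullet> (C *v x2)" and "a = y1 \<bullet> (A *v y1) + y2 \<bullet> (A *v y2)"
  define Z K where "Z = x1 \<bullet> (B *v y1) + x2 \<bullet> (B *v y2)" and "K = x2 \<bullet> (B *v y1) - x1 \<bullet> (B *v y2)"
  have Re_x: "- c - Z = l0 * X"
    using inner_rotation_pair_Re[OF x_rows] by (simp add: c_def Z_def X_def inner_diff_right)
  have Im_x: "K = l1 * X"
    using inner_rotation_pair_Im[OF x_rows] inner_symmetric_matrix_vector[OF symC, of x1 x2]
    by (simp add: K_def X_def inner_diff_right)
  have Re_y: "r * (Z - a) = l0 * Y"
    using inner_rotation_pair_Re[OF y_rows]
    by (simp add: Z_def a_def Y_def inner_diff_right inner_transpose_matrix_vector algebra_simps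
        del: transpose_matrix_vector)
  have Im_y: "r * K = l1 * Y"
    using inner_rotation_pair_Im[OF y_rows] inner_symmetric_matrix_vector[OF symA, of y1 y2]
    by (simp add: K_def Y_def inner_diff_right inner_transpose_matrix_vector algebra_simps
        del: transpose_matrix_vector)
  have "0 < X + Y"
    using nz vec_eq_0_iff_inl_inr[of p] vec_eq_0_iff_inl_inr[of q]
    by (auto simp: X_def Y_def x1_def x2_def y1_def y2_def add_pos_nonneg add_nonneg_pos)
  have c_ge: "- L * X \<le> c"
    using inner_matrix_vector_ge[OF normC, of x1] inner_matrix_vector_ge[OF normC, of x2]
    unfolding c_def X_def distrib_left by linarith
  have a_ge: "\<mu> * Y \<le> a" using lower[of y1] lower[of y2] by (simp add: a_def Y_def distrib_left)
  have "K\<^sup>2 \<le> L\<^sup>2 * X * Y"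
    unfolding K_def X_def Y_def by (rule inner_cross_term_sq_le[OF normB])
  with nonreal_eigenvalue_scalar_bounds[OF \<open>0 < r\<close> _ \<open>0 < X + Y\<close> Re_x Im_x Re_y Im_y c_ge a_ge]
    \<open>Im lam \<noteq> 0\<close>
  show "(Im lam)\<^sup>2 \<le> r * L\<^sup>2" and "2 * Re lam \<le> L - \<mu> * r"
    by (simp_all add: X_def l0_def l1_def)
qed

lemma blockM_eigenvalue_abs_Im_le:
  fixes A :: "real^'m^'m" and C :: "real^'n^'n" and B :: "real^'m^'n"
  assumes "transpose A = A" and "transpose C = C"
    and "\<And>z. \<mu> * (z \<bullet> z) \<le> z \<bullet> (A *v z)"
    and normB: "spec_norm B \<le> L" and "spec_norm C \<le> L" and "0 < r"
    and "is_eigenvalue (blockM A B C r) lam"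
  shows "\<bar>Im lam\<bar> \<le> sqrt r * L"
proof -
  have "0 \<le> L" using normB spec_norm_nonneg order_trans by blast
  show ?thesis
  proof (cases "Im lam = 0")
    case False
    have "sqrt ((Im lam)\<^sup>2) \<le> sqrt (r * L\<^sup>2)"
      using blockM_nonreal_eigenvalue_bounds(1)[OF assms False] by (rule real_sqrt_le_mono)
    then show ?thesis using \<open>0 \<le> L\<close> by (simp add: real_sqrt_mult)
  qed (use \<open>0 \<le> L\<close> \<open>0 < r\<close> in simp)
qed

text \<open>Here \<open>r s\<close> is the eigenvalue, \<open>\<sigma> = x\<bullet>Sx\<close> the Schur form and \<open>q = y\<bullet>A\<^sup>-\<^sup>1y\<close>.
  The key estimate is \<open>\<mu> (s Y + s\<^sup>2 q) \<le> s (\<mu> + s) Y\<close>, which holds for either sign of \<open>s\<close>.\<close>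
lemma real_eigenvalue_scalar_bound:
  fixes \<mu> L r s X Y c a q \<sigma> lm :: real
  assumes "0 < \<mu>" and "0 < r" and "L < r * \<mu>"
    and "0 \<le> X" and "0 \<le> Y" and "X = 0 \<Longrightarrow> 0 < Y"
    and lam: "r * s * X = - c - a - s * Y"
    and c: "- L * X \<le> c" and a: "\<mu> * Y \<le> a" and q: "\<mu> * q \<le> Y"
    and \<sigma>: "\<sigma> = - (r * s) * X + s * Y + s\<^sup>2 * q"
    and \<sigma>_pos: "0 < X \<Longrightarrow> 0 < \<sigma>" and \<sigma>_ge: "lm * X \<le> \<sigma>"
  shows "r * s \<le> - min L lm"
proof (rule ccontr)
  assume "\<not> ?thesis"
  then have gtL: "- L < r * s" and gtlm: "- lm < r * s" by auto
  have key: "\<mu> * (s * Y + s\<^sup>2 * q) \<le> s * (\<mu> + s) * Y"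
    using mult_left_mono[OF q, of "s\<^sup>2"] by (simp add: power2_eq_square algebra_simps)
  have "0 < \<mu> + s"
  proof (rule ccontr)
    assume "\<not> 0 < \<mu> + s"
    then have "r * s \<le> r * (- \<mu>)" using \<open>0 < r\<close> by (intro mult_left_mono) auto
    then show False using gtL \<open>L < r * \<mu>\<close> by simp
  qed
  have upper: "(\<mu> + s) * Y \<le> (L - r * s) * X" using lam c a by (simp add: algebra_simps)
  have "0 < X"
  proof (rule ccontr)
    assume "\<not> 0 < X"
    then have "X = 0" using \<open>0 \<le> X\<close> by simp
    then show False using upper \<open>X = 0 \<Longrightarrow> 0 < Y\<close> \<open>0 < \<mu> + s\<close> by (simp add: mult_le_0_iff)
  qed
  show False
  proof (cases "s \<le> 0")
    case True
    then have "s * (\<mu> + s) * Y \<le> 0"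
      using \<open>0 < \<mu> + s\<close> \<open>0 \<le> Y\<close> by (simp add: mult_nonpos_nonneg)
    then have "\<mu> * (s * Y + s\<^sup>2 * q) \<le> 0" using key by linarith
    then have "s * Y + s\<^sup>2 * q \<le> 0" using \<open>0 < \<mu>\<close> by (simp add: mult_le_0_iff)
    then have "lm * X \<le> (- (r * s)) * X" using \<sigma> \<sigma>_ge by simp
    then have "lm \<le> - (r * s)" using \<open>0 < X\<close> by (simp only: mult_le_cancel_right)
    then show False using gtlm by simp
  next
    case False
    have "\<mu> * (r * s * X) < \<mu> * (s * Y + s\<^sup>2 * q)"
      using \<sigma> \<sigma>_pos[OF \<open>0 < X\<close>] \<open>0 < \<mu>\<close> by simp
    also have "\<dots> \<le> s * ((L - r * s) * X)"
      using key mult_left_mono[OF upper, of s] False unfolding mult.assoc by linarith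
    also have "\<dots> \<le> s * (L * X)"
      using False \<open>0 < r\<close> \<open>0 < X\<close> by (intro mult_left_mono) (auto simp: algebra_simps)
    finally have "s * ((r * \<mu>) * X) < s * (L * X)" by (simp add: algebra_simps)
    then have "r * \<mu> < L" using False \<open>0 < X\<close> by simp
    then show False using \<open>L < r * \<mu>\<close> by simp
  qed
qed

lemma coercive_symmetric_matrix_inv:
  fixes A :: "real^'m^'m"
  assumes symA: "transpose A = A" and lower: "\<And>z. \<mu> * (z \<bullet> z) \<le> z \<bullet> (A *v z)" and "0 < \<mu>"
  shows "A ** matrix_inv A = mat 1" and "matrix_inv A ** A = mat 1"
    and "transpose (matrix_inv A) = matrix_inv A"
proof -
  have "x = 0" if "A *v x = 0" for x
  proof -
    have "x \<bullet> x \<le> 0" using lower[of x] that \<open>0 < \<mu>\<close> by (simp add: mult_le_0_iff)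
    then show ?thesis by (metis inner_eq_zero_iff inner_ge_zero order_antisym)
  qed
  then have "invertible A" by (simp add: invertible_left_inverse matrix_left_invertible_ker)
  then have "A ** matrix_inv A = mat 1 \<and> matrix_inv A ** A = mat 1"
    unfolding invertible_def matrix_inv_def by (rule someI_ex)
  then show inv: "A ** matrix_inv A = mat 1" "matrix_inv A ** A = mat 1" by auto
  have "transpose (matrix_inv A) ** A = mat 1"
    by (metis inv(1) matrix_transpose_mul symA transpose_mat)
  then have "transpose (matrix_inv A) = transpose (matrix_inv A) ** (A ** matrix_inv A)"
    using inv by simp
  also have "\<dots> = matrix_inv A"
    by (simp add: matrix_mul_assoc \<open>transpose (matrix_inv A) ** A = mat 1\<close>)
  finally show "transpose (matrix_inv A) = matrix_inv A" .
qed

lemma inner_coercive_preimage_le: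
  fixes A :: "real^'m^'m"
  assumes lower: "\<And>z. \<mu> * (z \<bullet> z) \<le> z \<bullet> (A *v z)" and "0 < \<mu>" and "A *v z = y"
  shows "\<mu> * (z \<bullet> y) \<le> y \<bullet> y"
proof -
  have "\<mu> * (norm z)\<^sup>2 \<le> norm z * norm y"
    using lower[of z] \<open>A *v z = y\<close> norm_cauchy_schwarz[of z y] by (simp add: power2_norm_eq_inner)
  then have "\<mu> * norm z \<le> norm y"
    using \<open>0 < \<mu>\<close> by (cases "norm z = 0") (auto simp: power2_eq_square)
  have "\<mu> * (z \<bullet> y) \<le> \<mu> * (norm z * norm y)"
    using \<open>0 < \<mu>\<close> by (simp add: norm_cauchy_schwarz)
  also have "\<dots> = norm y * (\<mu> * norm z)" by simp
  also have "\<dots> \<le> norm y * norm y" by (simp add: \<open>\<mu> * norm z \<le> norm y\<close> mult_left_mono)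
  also have "\<dots> = y \<bullet> y" by (simp add: power2_norm_eq_inner[symmetric] power2_eq_square)
  finally show ?thesis .
qed

text \<open>The second block row says \<open>B\<^sup>Tx = (A + s I) y\<close>, so
  \<open>A\<^sup>-\<^sup>1B\<^sup>Tx = y + s A\<^sup>-\<^sup>1y\<close> and the Schur form at \<open>x\<close> becomes explicit in \<open>y\<close>.\<close>
lemma blockM_real_eigenvector_identities:
  fixes A :: "real^'m^'m" and C :: "real^'n^'n" and B :: "real^'m^'n"
  assumes symA: "transpose A = A"
    and inv: "A ** matrix_inv A = mat 1" "matrix_inv A ** A = mat 1"
    and "0 < r" and eig: "blockM A B C r *v z = (r * s) *\<^sub>R z"
  defines "x \<equiv> vec_inl z" and "y \<equiv> vec_inr z"
  shows "r * s * (x \<bullet> x) = - (x \<bullet> (C *v x)) - y \<bullet> (A *v y) - s * (y \<bullet> y)"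
    and "x \<bullet> ((C + B ** matrix_inv A ** transpose B) *v x)
      = - (r * s) * (x \<bullet> x) + s * (y \<bullet> y) + s\<^sup>2 * (y \<bullet> (matrix_inv A *v y))"
proof -
  define w where "w = transpose B *v x"
  define u where "u = matrix_inv A *v y"
  have x_row: "- (C *v x) - B *v y = (r * s) *\<^sub>R x"
    using arg_cong[OF eig, of vec_inl] by (simp add: vec_inl_blockM x_def y_def)
  have "r *\<^sub>R (w - A *v y) = r *\<^sub>R (s *\<^sub>R y)"
    using arg_cong[OF eig, of vec_inr]
    by (simp add: vec_inr_blockM x_def y_def w_def del: transpose_matrix_vector)
  then have "r *\<^sub>R w = r *\<^sub>R (A *v y + s *\<^sub>R y)" by (simp add: algebra_simps)
  then have w: "w = A *v y + s *\<^sub>R y" using \<open>0 < r\<close> by simp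
  have xBy: "x \<bullet> (B *v y) = y \<bullet> (A *v y) + s * (y \<bullet> y)"
    using inner_transpose_matrix_vector[of y B x]
    by (simp add: w_def[symmetric] w inner_add_right del: transpose_matrix_vector)
  have "x \<bullet> (- (C *v x) - B *v y) = r * s * (x \<bullet> x)" by (simp add: x_row)
  then show "r * s * (x \<bullet> x) = - (x \<bullet> (C *v x)) - y \<bullet> (A *v y) - s * (y \<bullet> y)"
    by (simp add: inner_diff_right xBy)
  have Au: "A *v u = y" and uA: "matrix_inv A *v (A *v y) = y"
    by (simp_all add: u_def matrix_vector_mul_assoc inv)
  have "(B ** matrix_inv A ** transpose B) *v x = B *v (matrix_inv A *v w)"
    by (simp add: w_def matrix_mul_assoc matrix_vector_mul_assoc del: transpose_matrix_vector)
  then have "x \<bullet> ((B ** matrix_inv A ** transpose B) *v x) = (matrix_inv A *v w) \<bullet> w"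
    using inner_transpose_matrix_vector[of "matrix_inv A *v w" B x]
    by (simp add: w_def del: transpose_matrix_vector)
  also have "\<dots> = (y + s *\<^sub>R u) \<bullet> (A *v y + s *\<^sub>R y)"
    by (simp add: w matrix_vector_right_distrib matrix_vector_mult_scaleR uA u_def)
  also have "\<dots> = y \<bullet> (A *v y) + 2 * s * (y \<bullet> y) + s\<^sup>2 * (y \<bullet> u)"
    using inner_symmetric_matrix_vector[OF symA, of u y] Au
    by (simp add: inner_add_left inner_add_right power2_eq_square inner_commute algebra_simps)
  finally show "x \<bullet> ((C + B ** matrix_inv A ** transpose B) *v x)
      = - (r * s) * (x \<bullet> x) + s * (y \<bullet> y) + s\<^sup>2 * (y \<bullet> (matrix_inv A *v y))"
    using \<open>r * s * (x \<bullet> x) = _\<close>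
    by (simp add: matrix_vector_mult_add_rdistrib inner_add_right u_def algebra_simps)
qed

lemma blockM_real_eigenvalue_bound:
  fixes A :: "real^'m^'m" and C :: "real^'n^'n" and B :: "real^'m^'n"
  assumes symA: "transpose A = A" and symC: "transpose C = C"
    and lower: "\<And>z. \<mu> * (z \<bullet> z) \<le> z \<bullet> (A *v z)" and "0 < \<mu>"
    and normC: "spec_norm C \<le> L" and pd: "pos_def (C + B ** matrix_inv A ** transpose B)"
    and "0 < r" and "L < r * \<mu>"
    and eig: "is_eigenvalue (blockM A B C r) lam" and "Im lam = 0"
  shows "Re lam \<le> - min L (lambda_min (C + B ** matrix_inv A ** transpose B))"
proof -
  define S where "S = C + B ** matrix_inv A ** transpose B"
  note inv = coercive_symmetric_matrix_inv[OF symA lower \<open>0 < \<mu>\<close>]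
  have symS: "transpose S = S"
    using symC inv(3) by (simp add: S_def matrix_transpose_mul matrix_mul_assoc transpose_add)
  obtain z where "z \<noteq> 0" and z: "blockM A B C r *v z = Re lam *\<^sub>R z"
    using is_eigenvalue_Im_0E[OF eig \<open>Im lam = 0\<close>] .
  define s where "s = Re lam / r"
  have lam: "Re lam = r * s" using \<open>0 < r\<close> by (simp add: s_def)
  define x y where "x = vec_inl z" and "y = vec_inr z"
  note ids = blockM_real_eigenvector_identities[OF symA inv(1,2) \<open>0 < r\<close> z[unfolded lam],
      folded x_def y_def S_def]
  have "0 < y \<bullet> y" if "x \<bullet> x = 0"
    using \<open>z \<noteq> 0\<close> that vec_eq_0_iff_inl_inr[of z] by (simp add: x_def y_def)
  moreover have "\<mu> * (y \<bullet> (matrix_inv A *v y)) \<le> y \<bullet> y"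
    using inner_coercive_preimage_le[OF lower \<open>0 < \<mu>\<close>, of "matrix_inv A *v y" y]
    by (simp add: matrix_vector_mul_assoc inv inner_commute)
  moreover have "0 < x \<bullet> (S *v x)" if "0 < x \<bullet> x"
    using pd that by (simp add: pos_def_def S_def)
  ultimately have "r * s \<le> - min L (lambda_min S)"
    using real_eigenvalue_scalar_bound[OF \<open>0 < \<mu>\<close> \<open>0 < r\<close> \<open>L < r * \<mu>\<close> _ _ _ ids(1)
        inner_matrix_vector_ge[OF normC] lower _ ids(2) _ lambda_min_le_rayleigh[OF symS]]
    by simp
  then show ?thesis by (simp add: lam S_def)
qed

theorem lemma1:
  fixes A :: "real^'m^'m" and C :: "real^'n^'n" and B :: "real^'m^'n"
    and \<mu> L r :: real and lam :: complex
  assumes symA: "transpose A = A" and symC: "transpose C = C"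
    and mu_pos: "0 < \<mu>" and mu_le_L: "\<mu> \<le> L"
    and A_lower: "psd_le (\<mu> *\<^sub>R mat 1) A" and A_upper: "psd_le A (L *\<^sub>R mat 1)"
    and normB: "spec_norm B \<le> L" and normC: "spec_norm C \<le> L"
    and schur_pd: "pos_def (C + B ** matrix_inv A ** transpose B)"
    and r_pos: "0 < r"
    and eig: "is_eigenvalue (blockM A B C r) lam"
  shows "\<bar>Im lam\<bar> \<le> sqrt r * L
    \<and> (Im lam \<noteq> 0 \<longrightarrow> Re lam \<le> - (\<mu> * (r - L / \<mu>)) / 2)
    \<and> (r \<ge> 1 \<longrightarrow> (Re lam)\<^sup>2 + (Im lam)\<^sup>2 \<le> (spec_norm (blockM A B C r))\<^sup>2
                   \<and> (spec_norm (blockM A B C r))\<^sup>2 \<le> 4 * r\<^sup>2 * L\<^sup>2)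
    \<and> (r > L / \<mu> \<and> Im lam = 0 \<longrightarrow>
           Re lam \<le> - min L (lambda_min (C + B ** matrix_inv A ** transpose B)))
    \<and> (r > L / \<mu> \<and> min L (lambda_min (C + B ** matrix_inv A ** transpose B)) > 0 \<longrightarrow>
           Re lam < 0)"
proof -
  have lower: "\<And>z. \<mu> * (z \<bullet> z) \<le> z \<bullet> (A *v z)" and upper: "\<And>z. z \<bullet> (A *v z) \<le> L * (z \<bullet> z)"
    using A_lower A_upper by (simp_all add: psd_le_scaleR_mat_1_left psd_le_scaleR_mat_1_right)
  have psd: "0 \<le> z \<bullet> (A *v z)" for z
    using lower[of z] mult_nonneg_nonneg[OF less_imp_le[OF mu_pos] inner_ge_zero[of z]] by linarith
  have rL: "r > L / \<mu> \<longleftrightarrow> L < r * \<mu>" using mu_pos by (simp add: divide_less_eq)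
  note nonreal = blockM_nonreal_eigenvalue_bounds[OF symA symC lower normB normC r_pos eig]
  note real = blockM_real_eigenvalue_bound[OF symA symC lower mu_pos normC schur_pd r_pos _ eig]
  show ?thesis
  proof (intro conjI impI)
    show "\<bar>Im lam\<bar> \<le> sqrt r * L"
      by (rule blockM_eigenvalue_abs_Im_le[OF symA symC lower normB normC r_pos eig])
    show "Re lam \<le> - (\<mu> * (r - L / \<mu>)) / 2" if "Im lam \<noteq> 0"
      using nonreal(2)[OF that] mu_pos by (simp add: right_diff_distrib)
    show "(Re lam)\<^sup>2 + (Im lam)\<^sup>2 \<le> (spec_norm (blockM A B C r))\<^sup>2"
      by (rule is_eigenvalue_modulus_le_spec_norm[OF eig])
    show "(spec_norm (blockM A B C r))\<^sup>2 \<le> 4 * r\<^sup>2 * L\<^sup>2" if "1 \<le> r"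
      using power_mono[OF spec_norm_blockM_le[OF symA psd upper normB normC that] spec_norm_nonneg, of 2]
      by (simp add: power_mult_distrib)
    show "Re lam \<le> - min L (lambda_min (C + B ** matrix_inv A ** transpose B))"
      if "r > L / \<mu> \<and> Im lam = 0"
      using that real unfolding rL by blast
    show "Re lam < 0"
      if "r > L / \<mu> \<and> min L (lambda_min (C + B ** matrix_inv A ** transpose B)) > 0"
      using that real nonreal(2) unfolding rL by (cases "Im lam = 0") (force, simp add: mult.commute)
  qed
qed

end
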